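(* Let $R$ be a commutative ring and $M$ a non-zero $R$-module. (1) If $M=\sum_{i=1}^n K_i$ is a minimal second representation of $M$ such that the ideals $Ann(K_1),\dots,Ann(K_n)$ are pairwise incomparable (i.e. $att^s(M)=Min(att^s(M))$) and $K_i\cap\sum_{j\neq i}K_j$ is a PS-hollow submodule of $M$ for all $i\in\{1,\dots,n\}$, then $M=\bigoplus_{i=1}^n K_i$ if and only if $K_i\cap K_j=0$ for all $i\neq j$. (2) Let $M$ be distributive and $M=\sum_{i=1}^n K_i$ a minimal PS-hollow representation, with $K_i$ $H_i$-PS-hollow, such that every submodule of $K_i$ is zero or strongly irreducible or $H_i$-PS-hollow. Then $M=\bigoplus_{i=1}^n K_i$.
   Context: A submodule $N\neq 0$ is second iff for every ideal $I\leq R$, $IN=N$ or $IN=0$. A minimal second representation of $M$ is $M=\sum_{i=1}^n K_i$ with each $K_i$ second, the ideals $Ann(K_i)$ pairwise distinct, and no $K_j$ contained in $\sum_{i\neq j}K_i$; $att^s(M)=\{Ann(K_i)\}$. An $R$-submodule $N\leq M$ is PS-hollow iff for every ideal $I$ and submodule $L$: $N\subseteq IM+L$ implies $N\subseteq IM$ or $N\subseteq L$. For PS-hollow $N$: $A_N=\{I: N\subseteq IM\}$, $H_N$ its minimal elements, $In(N)=\bigcap_{I\in H_N}IM$ ($=M$ if $H_N=\emptyset$); $N$ is $H$-PS-hollow iff PS-hollow with $H_N=H$. A minimal PS-hollow representation is $M=\sum_{i=1}^n K_i$ with each $K_i$ $H_i$-PS-hollow, $In(K_1),\dots,In(K_n)$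 pairwise incomparable, and $K_j\not\subseteq\sum_{i\neq j}K_i$ for all $j$. A proper submodule $N\lneq M$ is strongly irreducible iff for all submodules $A,B\leq M$, $A\cap B\subseteq N$ implies $A\subseteq N$ or $B\subseteq N$. $M$ is distributive iff its lattice of submodules is distributive. *)

theory Defs
  imports "HOL-Algebra.Module" "HOL-Algebra.Ideal"
begin

definition gen_sm :: "('a, 'c) ring_scheme \<Rightarrow> ('a, 'b, 'd) module_scheme \<Rightarrow> 'b set \<Rightarrow> 'b set" where
  "gen_sm R M X = \<Inter>{L. submodule L R M \<and> X \<subseteq> L}"

definition sm_sum :: "('a, 'b, 'd) module_scheme \<Rightarrow> 'b set \<Rightarrow> 'b set \<Rightarrow> 'b set" where
  "sm_sum M A B = {a \<oplus>\<^bsub>M\<^esub> b | a b. a \<in> A \<and> b \<in> B}"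

text \<open>Sum of a family of submodules indexed by S (the zero submodule if S is empty).\<close>
definition sm_Sum :: "('a, 'c) ring_scheme \<Rightarrow> ('a, 'b, 'd) module_scheme \<Rightarrow> 'i set \<Rightarrow> ('i \<Rightarrow> 'b set) \<Rightarrow> 'b set" where
  "sm_Sum R M S K = gen_sm R M (\<Union>i\<in>S. K i)"

definition ideal_sm :: "('a, 'c) ring_scheme \<Rightarrow> ('a, 'b, 'd) module_scheme \<Rightarrow> 'a set \<Rightarrow> 'b set \<Rightarrow> 'b set" where
  "ideal_sm R M I N = gen_sm R M {a \<odot>\<^bsub>M\<^esub> x | a x. a \<in> I \<and> x \<in> N}"

definition Ann :: "('a, 'c) ring_scheme \<Rightarrow> ('a, 'b, 'd) module_scheme \<Rightarrow> 'b set \<Rightarrow> 'a set" where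
  "Ann R M N = {a \<in> carrier R. \<forall>x\<in>N. a \<odot>\<^bsub>M\<^esub> x = \<zero>\<^bsub>M\<^esub>}"

definition second_sm :: "('a, 'c) ring_scheme \<Rightarrow> ('a, 'b, 'd) module_scheme \<Rightarrow> 'b set \<Rightarrow> bool" where
  "second_sm R M N \<longleftrightarrow> submodule N R M \<and> N \<noteq> {\<zero>\<^bsub>M\<^esub>} \<and>
     (\<forall>I. ideal I R \<longrightarrow> ideal_sm R M I N = N \<or> ideal_sm R M I N = {\<zero>\<^bsub>M\<^esub>})"

definition min_second_rep :: "('a, 'c) ring_scheme \<Rightarrow> ('a, 'b, 'd) module_scheme \<Rightarrow> nat \<Rightarrow> (nat \<Rightarrow> 'b set) \<Rightarrow> bool" where
  "min_second_rep R M n K \<longleftrightarrow>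
     sm_Sum R M {1..n} K = carrier M \<and>
     (\<forall>i\<in>{1..n}. second_sm R M (K i)) \<and>
     (\<forall>i\<in>{1..n}. \<forall>j\<in>{1..n}. i \<noteq> j \<longrightarrow> Ann R M (K i) \<noteq> Ann R M (K j)) \<and>
     (\<forall>j\<in>{1..n}. \<not> K j \<subseteq> sm_Sum R M ({1..n} - {j}) K)"

definition PS_hollow :: "('a, 'c) ring_scheme \<Rightarrow> ('a, 'b, 'd) module_scheme \<Rightarrow> 'b set \<Rightarrow> bool" where
  "PS_hollow R M N \<longleftrightarrow> submodule N R M \<and>
     (\<forall>I L. ideal I R \<longrightarrow> submodule L R M \<longrightarrow>
        N \<subseteq> sm_sum M (ideal_sm R M I (carrier M)) L \<longrightarrow>
        N \<subseteq> ideal_sm R M I (carrier M) \<or> N \<subseteq> L)"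

definition A_set :: "('a, 'c) ring_scheme \<Rightarrow> ('a, 'b, 'd) module_scheme \<Rightarrow> 'b set \<Rightarrow> 'a set set" where
  "A_set R M N = {I. ideal I R \<and> N \<subseteq> ideal_sm R M I (carrier M)}"

definition H_set :: "('a, 'c) ring_scheme \<Rightarrow> ('a, 'b, 'd) module_scheme \<Rightarrow> 'b set \<Rightarrow> 'a set set" where
  "H_set R M N = {I \<in> A_set R M N. \<forall>J\<in>A_set R M N. J \<subseteq> I \<longrightarrow> J = I}"

definition In_sm :: "('a, 'c) ring_scheme \<Rightarrow> ('a, 'b, 'd) module_scheme \<Rightarrow> 'b set \<Rightarrow> 'b set" where
  "In_sm R M N = carrier M \<inter> (\<Inter>I\<in>H_set R M N. ideal_sm R M I (carrier M))"

definition H_PS_hollow :: "('a, 'c) ring_scheme \<Rightarrow> ('a, 'b, 'd) module_scheme \<Rightarrow> 'a set set \<Rightarrow> 'b set \<Rightarrow> bool" where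
  "H_PS_hollow R M H N \<longleftrightarrow> PS_hollow R M N \<and> H_set R M N = H"

definition min_PS_hollow_rep :: "('a, 'c) ring_scheme \<Rightarrow> ('a, 'b, 'd) module_scheme \<Rightarrow> nat \<Rightarrow> (nat \<Rightarrow> 'b set) \<Rightarrow> (nat \<Rightarrow> 'a set set) \<Rightarrow> bool" where
  "min_PS_hollow_rep R M n K H \<longleftrightarrow>
     sm_Sum R M {1..n} K = carrier M \<and>
     (\<forall>i\<in>{1..n}. H_PS_hollow R M (H i) (K i)) \<and>
     (\<forall>i\<in>{1..n}. \<forall>j\<in>{1..n}. i \<noteq> j \<longrightarrow> \<not> In_sm R M (K i) \<subseteq> In_sm R M (K j)) \<and>
     (\<forall>j\<in>{1..n}. \<not> K j \<subseteq> sm_Sum R M ({1..n} - {j}) K)"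

definition strongly_irreducible :: "('a, 'c) ring_scheme \<Rightarrow> ('a, 'b, 'd) module_scheme \<Rightarrow> 'b set \<Rightarrow> bool" where
  "strongly_irreducible R M N \<longleftrightarrow> submodule N R M \<and> N \<noteq> carrier M \<and>
     (\<forall>A B. submodule A R M \<longrightarrow> submodule B R M \<longrightarrow> A \<inter> B \<subseteq> N \<longrightarrow> A \<subseteq> N \<or> B \<subseteq> N)"

text \<open>Distributive lattice of submodules (join = sum, meet = intersection).\<close>
definition distributive_module :: "('a, 'c) ring_scheme \<Rightarrow> ('a, 'b, 'd) module_scheme \<Rightarrow> bool" where
  "distributive_module R M \<longleftrightarrow>
     (\<forall>A B C. submodule A R M \<longrightarrow> submodule B R M \<longrightarrow> submodule C R M \<longrightarrow>
        A \<inter> sm_sum M B C = sm_sum M (A \<inter> B) (A \<inter> C))"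

definition direct_sum_rep :: "('a, 'c) ring_scheme \<Rightarrow> ('a, 'b, 'd) module_scheme \<Rightarrow> nat \<Rightarrow> (nat \<Rightarrow> 'b set) \<Rightarrow> bool" where
  "direct_sum_rep R M n K \<longleftrightarrow>
     sm_Sum R M {1..n} K = carrier M \<and>
     (\<forall>i\<in>{1..n}. K i \<inter> sm_Sum R M ({1..n} - {i}) K = {\<zero>\<^bsub>M\<^esub>})"

end

theory Submission
  imports Defs
begin

text \<open>
  (1) The annihilator of a second submodule is prime. Hence, if the annihilators of the
  second components are pairwise incomparable, multiplying elements of
  \<open>Ann(K\<^sub>k) - Ann(K\<^sub>j)\<close> over all \<open>k \<noteq> j\<close> gives an \<open>a\<close> that kills every \<open>K\<^sub>k\<close>, \<open>k \<noteq> j\<close>,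
  but not \<open>K\<^sub>j\<close>; then \<open>aM \<subseteq> K\<^sub>j = aK\<^sub>j \<subseteq> aM\<close>. So every component has the form \<open>IM\<close>, and a
  PS-hollow submodule of a finite sum of submodules \<open>IM\<close> lies in one of the summands.
  Applied to \<open>K\<^sub>i \<inter> \<Sum>\<^bsub>j\<noteq>i\<^esub> K\<^sub>j\<close>, this puts it inside some \<open>K\<^sub>i \<inter> K\<^sub>j = 0\<close>.

  (2) For \<open>i \<noteq> j\<close>, \<open>K\<^sub>i \<inter> K\<^sub>j\<close> is not strongly irreducible, since by minimality neither
  component contains the other; and it is not a nonzero \<open>H\<^sub>i\<close>- and \<open>H\<^sub>j\<close>-PS-hollow
  submodule, since \<open>H\<^sub>i = H\<^sub>j\<close> would give \<open>In(K\<^sub>i) = In(K\<^sub>j)\<close>. So the components meet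
  pairwise in \<open>0\<close>, and distributivity turns this into independence.
\<close>

context module
begin

lemma submodule_zero_closed: "submodule H R M \<Longrightarrow> \<zero>\<^bsub>M\<^esub> \<in> H"
  using submodule.axioms(1) subgroup.one_closed by fastforce

lemma zero_submodule: "submodule {\<zero>\<^bsub>M\<^esub>} R M"
  by (rule submoduleI) auto

lemma submodule_Int:
  assumes A: "submodule A R M" and B: "submodule B R M"
  shows "submodule (A \<inter> B) R M"
  using submoduleE(1,3-5)[OF A] submoduleE(1,3-5)[OF B]
    submodule_zero_closed[OF A] submodule_zero_closed[OF B]
  by (intro submoduleI) auto

lemma smult_preimage_submodule:
  assumes L: "submodule L R M" and a: "a \<in> carrier R"
  shows "submodule {x \<in> carrier M. a \<odot>\<^bsub>M\<^esub> x \<in> L} R M"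
proof (rule submoduleI)
  fix r x assume r: "r \<in> carrier R" and x: "x \<in> {x \<in> carrier M. a \<odot>\<^bsub>M\<^esub> x \<in> L}"
  then have "a \<odot>\<^bsub>M\<^esub> (r \<odot>\<^bsub>M\<^esub> x) = r \<odot>\<^bsub>M\<^esub> (a \<odot>\<^bsub>M\<^esub> x)"
    using a by (simp add: smult_assoc1[symmetric] m_comm)
  then show "r \<odot>\<^bsub>M\<^esub> x \<in> {x \<in> carrier M. a \<odot>\<^bsub>M\<^esub> x \<in> L}"
    using r x submoduleE(4)[OF L] by simp
qed (use a submoduleE[OF L] submodule_zero_closed[OF L] in \<open>auto simp: smult_r_minus smult_r_distr\<close>)

lemma gen_sm_submodule:
  assumes "X \<subseteq> carrier M"
  shows "submodule (gen_sm R M X) R M"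
  unfolding gen_sm_def
proof (rule submoduleI)
  have "carrier M \<in> {L. submodule L R M \<and> X \<subseteq> L}"
    using assms carrier_is_submodule by blast
  then show "\<Inter>{L. submodule L R M \<and> X \<subseteq> L} \<subseteq> carrier M" by blast
qed (use submodule_zero_closed submoduleE(3) submoduleE(4) submoduleE(5) in blast)+

lemma gen_sm_incl: "X \<subseteq> gen_sm R M X"
  unfolding gen_sm_def by blast

lemma gen_sm_least: "submodule L R M \<Longrightarrow> X \<subseteq> L \<Longrightarrow> gen_sm R M X \<subseteq> L"
  unfolding gen_sm_def by blast

lemma sm_sum_submodule:
  assumes A: "submodule A R M" and B: "submodule B R M"
  shows "submodule (sm_sum M A B) R M"
  unfolding sm_sum_def
proof (rule submoduleI)
  have cA: "A \<subseteq> carrier M" and cB: "B \<subseteq> carrier M"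
    using submoduleE(1) A B by auto
  show "{a \<oplus>\<^bsub>M\<^esub> b |a b. a \<in> A \<and> b \<in> B} \<subseteq> carrier M"
    using cA cB by auto
  show "\<zero>\<^bsub>M\<^esub> \<in> {a \<oplus>\<^bsub>M\<^esub> b |a b. a \<in> A \<and> b \<in> B}"
    using submodule_zero_closed[OF A] submodule_zero_closed[OF B] by force
  show "\<ominus>\<^bsub>M\<^esub> x \<in> {a \<oplus>\<^bsub>M\<^esub> b |a b. a \<in> A \<and> b \<in> B}"
    if x: "x \<in> {a \<oplus>\<^bsub>M\<^esub> b |a b. a \<in> A \<and> b \<in> B}" for x
  proof -
    obtain a b where ab: "x = a \<oplus>\<^bsub>M\<^esub> b" "a \<in> A" "b \<in> B" using x by blast
    then have "\<ominus>\<^bsub>M\<^esub> x = \<ominus>\<^bsub>M\<^esub> a \<oplus>\<^bsub>M\<^esub> \<ominus>\<^bsub>M\<^esub> b"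
      using cA cB by (simp add: M.minus_add subsetD)
    then show ?thesis using ab submoduleE(3)[OF A] submoduleE(3)[OF B] by auto
  qed
  show "x \<oplus>\<^bsub>M\<^esub> y \<in> {a \<oplus>\<^bsub>M\<^esub> b |a b. a \<in> A \<and> b \<in> B}"
    if xy: "x \<in> {a \<oplus>\<^bsub>M\<^esub> b |a b. a \<in> A \<and> b \<in> B}" "y \<in> {a \<oplus>\<^bsub>M\<^esub> b |a b. a \<in> A \<and> b \<in> B}" for x y
  proof -
    obtain a b a' b' where ab: "x = a \<oplus>\<^bsub>M\<^esub> b" "a \<in> A" "b \<in> B" "y = a' \<oplus>\<^bsub>M\<^esub> b'" "a' \<in> A" "b' \<in> B"
      using xy by blast
    then have "x \<oplus>\<^bsub>M\<^esub> y = (a \<oplus>\<^bsub>M\<^esub> a') \<oplus>\<^bsub>M\<^esub> (b \<oplus>\<^bsub>M\<^esub> b')"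
      using cA cB by (simp add: M.a_ac subsetD)
    then show ?thesis using ab submoduleE(5)[OF A] submoduleE(5)[OF B] by blast
  qed
  show "r \<odot>\<^bsub>M\<^esub> x \<in> {a \<oplus>\<^bsub>M\<^esub> b |a b. a \<in> A \<and> b \<in> B}"
    if r: "r \<in> carrier R" and x: "x \<in> {a \<oplus>\<^bsub>M\<^esub> b |a b. a \<in> A \<and> b \<in> B}" for r x
  proof -
    obtain a b where ab: "x = a \<oplus>\<^bsub>M\<^esub> b" "a \<in> A" "b \<in> B" using x by blast
    then have "r \<odot>\<^bsub>M\<^esub> x = r \<odot>\<^bsub>M\<^esub> a \<oplus>\<^bsub>M\<^esub> r \<odot>\<^bsub>M\<^esub> b"
      using cA cB r by (simp add: smult_r_distr subsetD)
    then show ?thesis using ab submoduleE(4)[OF A] submoduleE(4)[OF B] r by blast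
  qed
qed

lemma sm_sum_upper1: "submodule B R M \<Longrightarrow> A \<subseteq> carrier M \<Longrightarrow> A \<subseteq> sm_sum M A B"
  unfolding sm_sum_def using submodule_zero_closed by force

lemma sm_sum_upper2: "submodule A R M \<Longrightarrow> B \<subseteq> carrier M \<Longrightarrow> B \<subseteq> sm_sum M A B"
  unfolding sm_sum_def using submodule_zero_closed by force

lemma sm_sum_zero: "sm_sum M {\<zero>\<^bsub>M\<^esub>} {\<zero>\<^bsub>M\<^esub>} = {\<zero>\<^bsub>M\<^esub>}"
  unfolding sm_sum_def by auto

lemma sm_Sum_submodule:
  "(\<And>k. k \<in> S \<Longrightarrow> submodule (K k) R M) \<Longrightarrow> submodule (sm_Sum R M S K) R M"
  unfolding sm_Sum_def by (rule gen_sm_submodule) (use submoduleE(1) in blast)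

lemma zero_mem_sm_Sum: "\<zero>\<^bsub>M\<^esub> \<in> sm_Sum R M S K"
  unfolding sm_Sum_def gen_sm_def using submodule_zero_closed by blast

lemma sm_Sum_empty: "sm_Sum R M {} K = {\<zero>\<^bsub>M\<^esub>}"
  using gen_sm_least[OF zero_submodule, of "{}"] zero_mem_sm_Sum[of "{}" K]
  unfolding sm_Sum_def by auto

lemma sm_Sum_upper: "j \<in> S \<Longrightarrow> K j \<subseteq> sm_Sum R M S K"
  unfolding sm_Sum_def using gen_sm_incl by blast

lemma sm_Sum_insert_subset:
  assumes "\<And>k. k \<in> insert j T \<Longrightarrow> submodule (K k) R M"
  shows "sm_Sum R M (insert j T) K \<subseteq> sm_sum M (K j) (sm_Sum R M T K)"
proof -
  have Kj: "submodule (K j) R M" and ST: "submodule (sm_Sum R M T K) R M"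
    using assms sm_Sum_submodule[of T K] by auto
  have upper: "K j \<subseteq> sm_sum M (K j) (sm_Sum R M T K)" "sm_Sum R M T K \<subseteq> sm_sum M (K j) (sm_Sum R M T K)"
    using sm_sum_upper1[OF ST] sm_sum_upper2[OF Kj] submoduleE(1)[OF Kj] submoduleE(1)[OF ST] by auto
  show ?thesis
    unfolding sm_Sum_def[of R M "insert j T"]
  proof (rule gen_sm_least[OF sm_sum_submodule[OF Kj ST]])
    show "(\<Union>i\<in>insert j T. K i) \<subseteq> sm_sum M (K j) (sm_Sum R M T K)"
      using upper sm_Sum_upper[of _ T K] by blast
  qed
qed

lemma ideal_sm_submodule:
  "ideal I R \<Longrightarrow> N \<subseteq> carrier M \<Longrightarrow> submodule (ideal_sm R M I N) R M"
  unfolding ideal_sm_def by (rule gen_sm_submodule) (auto dest: ideal.Icarr)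

lemma smult_mem_ideal_sm: "a \<in> I \<Longrightarrow> x \<in> N \<Longrightarrow> a \<odot>\<^bsub>M\<^esub> x \<in> ideal_sm R M I N"
  unfolding ideal_sm_def by (rule subsetD[OF gen_sm_incl]) blast

lemma ideal_sm_mono: "N \<subseteq> N' \<Longrightarrow> ideal_sm R M I N \<subseteq> ideal_sm R M I N'"
  unfolding ideal_sm_def gen_sm_def by (rule Inter_anti_mono) blast

lemma ideal_sm_PIdl_subset:
  assumes L: "submodule L R M" and N: "N \<subseteq> carrier M" and a: "a \<in> carrier R"
    and aN: "\<And>x. x \<in> N \<Longrightarrow> a \<odot>\<^bsub>M\<^esub> x \<in> L"
  shows "ideal_sm R M (PIdl a) N \<subseteq> L"
  unfolding ideal_sm_def
proof (rule gen_sm_least[OF L], safe)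
  fix c x assume "c \<in> PIdl a" and x: "x \<in> N"
  then obtain r where r: "r \<in> carrier R" and c: "c = r \<otimes> a"
    unfolding cgenideal_def by blast
  have "c \<odot>\<^bsub>M\<^esub> x = r \<odot>\<^bsub>M\<^esub> (a \<odot>\<^bsub>M\<^esub> x)"
    using c r a x N by (auto simp: smult_assoc1)
  then show "c \<odot>\<^bsub>M\<^esub> x \<in> L"
    using submoduleE(4)[OF L r] aN[OF x] by simp
qed

lemma Ann_mult_closed:
  "N \<subseteq> carrier M \<Longrightarrow> a \<in> Ann R M N \<Longrightarrow> b \<in> carrier R \<Longrightarrow> b \<otimes> a \<in> Ann R M N"
  unfolding Ann_def by (auto simp: smult_assoc1 subset_iff)

lemma one_notin_Ann_second:
  assumes "second_sm R M K"
  shows "\<one> \<notin> Ann R M K"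
proof -
  have K: "submodule K R M" and "K \<noteq> {\<zero>\<^bsub>M\<^esub>}"
    using assms unfolding second_sm_def by auto
  then obtain x where x: "x \<in> K" "x \<noteq> \<zero>\<^bsub>M\<^esub>"
    using submodule_zero_closed by blast
  moreover have "\<one> \<odot>\<^bsub>M\<^esub> x = x"
    using x submoduleE(1)[OF K] by auto
  ultimately show ?thesis
    unfolding Ann_def by force
qed

lemma second_ideal_sm_PIdl:
  assumes sec: "second_sm R M K" and a: "a \<in> carrier R" "a \<notin> Ann R M K"
  shows "ideal_sm R M (PIdl a) K = K"
proof -
  have "ideal_sm R M (PIdl a) K \<noteq> {\<zero>\<^bsub>M\<^esub>}"
    using a smult_mem_ideal_sm[OF cgenideal_self[OF a(1)], of _ K] unfolding Ann_def by auto
  then show ?thesis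
    using sec cgenideal_ideal[OF a(1)] unfolding second_sm_def by blast
qed

lemma second_Ann_prime:
  assumes sec: "second_sm R M K" and a: "a \<in> carrier R" and b: "b \<in> carrier R"
    and ab: "a \<otimes> b \<in> Ann R M K"
  shows "a \<in> Ann R M K \<or> b \<in> Ann R M K"
proof -
  have cK: "K \<subseteq> carrier M"
    using sec submoduleE(1) unfolding second_sm_def by blast
  have "ideal_sm R M (PIdl a) K \<subseteq> {x \<in> carrier M. b \<odot>\<^bsub>M\<^esub> x \<in> {\<zero>\<^bsub>M\<^esub>}}"
  proof (rule ideal_sm_PIdl_subset[OF smult_preimage_submodule[OF zero_submodule b] cK a])
    fix x assume "x \<in> K"
    then show "a \<odot>\<^bsub>M\<^esub> x \<in> {x \<in> carrier M. b \<odot>\<^bsub>M\<^esub> x \<in> {\<zero>\<^bsub>M\<^esub>}}"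
      using ab a b cK unfolding Ann_def by (auto simp: smult_assoc1[symmetric] m_comm)
  qed
  then have "a \<notin> Ann R M K \<Longrightarrow> b \<in> Ann R M K"
    using second_ideal_sm_PIdl[OF sec a] b unfolding Ann_def by auto
  then show ?thesis by blast
qed

lemma second_separating_element:
  assumes sec: "second_sm R M K" and "finite T"
    and L: "\<And>k. k \<in> T \<Longrightarrow> L k \<subseteq> carrier M \<and> \<not> Ann R M (L k) \<subseteq> Ann R M K"
  shows "\<exists>a\<in>carrier R. a \<notin> Ann R M K \<and> (\<forall>k\<in>T. a \<in> Ann R M (L k))"
  using \<open>finite T\<close> L
proof (induction T rule: finite_induct)
  case empty
  show ?case using one_notin_Ann_second[OF sec] by blast
next
  case (insert k T)
  then obtain a where a: "a \<in> carrier R" "a \<notin> Ann R M K" "\<forall>t\<in>T. a \<in> Ann R M (L t)"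
    by blast
  obtain c where c: "c \<in> Ann R M (L k)" "c \<notin> Ann R M K"
    using insert.prems by blast
  have cR: "c \<in> carrier R"
    using c(1) unfolding Ann_def by blast
  have "a \<otimes> c \<notin> Ann R M K"
    using second_Ann_prime[OF sec a(1) cR] a(2) c(2) by blast
  moreover have "a \<otimes> c \<in> Ann R M (L k)"
    using Ann_mult_closed[OF _ c(1) a(1)] insert.prems by blast
  moreover have "a \<otimes> c \<in> Ann R M (L t)" if "t \<in> T" for t
    using Ann_mult_closed[OF _ _ cR, of "L t" a] a(1,3) cR insert.prems that
    by (simp add: m_comm)
  ultimately show ?case using a(1) cR by blast
qed

lemma component_eq_ideal_sm_PIdl:
  assumes sum: "sm_Sum R M S K = carrier M"
    and subs: "\<And>k. k \<in> S \<Longrightarrow> submodule (K k) R M"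
    and j: "j \<in> S" and sec: "second_sm R M (K j)"
    and a: "a \<in> carrier R" "a \<notin> Ann R M (K j)"
    and ann: "\<And>k. k \<in> S - {j} \<Longrightarrow> a \<in> Ann R M (K k)"
  shows "K j = ideal_sm R M (PIdl a) (carrier M)"
proof
  have "K j = ideal_sm R M (PIdl a) (K j)"
    using second_ideal_sm_PIdl[OF sec a] by simp
  also have "\<dots> \<subseteq> ideal_sm R M (PIdl a) (carrier M)"
    using submoduleE(1)[OF subs[OF j]] by (rule ideal_sm_mono)
  finally show "K j \<subseteq> ideal_sm R M (PIdl a) (carrier M)" .
next
  have Kj: "submodule (K j) R M" using subs[OF j] .
  let ?P = "{x \<in> carrier M. a \<odot>\<^bsub>M\<^esub> x \<in> K j}"
  have "K k \<subseteq> ?P" if k: "k \<in> S" for k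
  proof
    fix x assume x: "x \<in> K k"
    have "a \<odot>\<^bsub>M\<^esub> x \<in> K j"
    proof (cases "k = j")
      case True
      then show ?thesis using x submoduleE(4)[OF Kj a(1)] by simp
    next
      case False
      then have "a \<odot>\<^bsub>M\<^esub> x = \<zero>\<^bsub>M\<^esub>"
        using ann k x unfolding Ann_def by blast
      then show ?thesis using submodule_zero_closed[OF Kj] by simp
    qed
    then show "x \<in> ?P"
      using x submoduleE(1)[OF subs[OF k]] by blast
  qed
  then have "sm_Sum R M S K \<subseteq> ?P"
    unfolding sm_Sum_def by (intro gen_sm_least[OF smult_preimage_submodule[OF Kj a(1)]]) blast
  then have "carrier M \<subseteq> ?P"
    using sum by simp
  then show "ideal_sm R M (PIdl a) (carrier M) \<subseteq> K j"
    by (intro ideal_sm_PIdl_subset[OF Kj _ a(1)]) auto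
qed

lemma min_second_rep_component_eq_ideal_sm:
  assumes rep: "min_second_rep R M n K"
    and incomp: "\<forall>i\<in>{1..n}. \<forall>j\<in>{1..n}. i \<noteq> j \<longrightarrow> \<not> Ann R M (K i) \<subseteq> Ann R M (K j)"
    and j: "j \<in> {1..n}"
  shows "\<exists>I. ideal I R \<and> K j = ideal_sm R M I (carrier M)"
proof -
  have sum: "sm_Sum R M {1..n} K = carrier M" and sec: "\<forall>k\<in>{1..n}. second_sm R M (K k)"
    using rep unfolding min_second_rep_def by auto
  then have subs: "\<And>k. k \<in> {1..n} \<Longrightarrow> submodule (K k) R M"
    unfolding second_sm_def by blast
  obtain a where a: "a \<in> carrier R" "a \<notin> Ann R M (K j)" "\<forall>k\<in>{1..n} - {j}. a \<in> Ann R M (K k)"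
    using second_separating_element[OF bspec[OF sec j], of "{1..n} - {j}" K] incomp j
      submoduleE(1)[OF subs] by blast
  show ?thesis
    using component_eq_ideal_sm_PIdl[OF sum subs j bspec[OF sec j] a(1,2)] a(3)
      cgenideal_ideal[OF a(1)] by blast
qed

lemma PS_hollowD:
  assumes "PS_hollow R M N" "ideal I R" "submodule L R M"
    and "N \<subseteq> sm_sum M (ideal_sm R M I (carrier M)) L"
  shows "N \<subseteq> ideal_sm R M I (carrier M) \<or> N \<subseteq> L"
  using assms unfolding PS_hollow_def by blast

lemma PS_hollow_subset_sm_Sum:
  assumes hollow: "PS_hollow R M N" and "finite T"
    and "\<And>t. t \<in> T \<Longrightarrow> \<exists>I. ideal I R \<and> K t = ideal_sm R M I (carrier M)"
    and "N \<subseteq> sm_Sum R M T K"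
  shows "N \<subseteq> {\<zero>\<^bsub>M\<^esub>} \<or> (\<exists>t\<in>T. N \<subseteq> K t)"
  using assms(2-4)
proof (induction T rule: finite_induct)
  case empty
  then show ?case by (simp add: sm_Sum_empty)
next
  case (insert j T)
  note comps = insert.prems(1) and N_sub = insert.prems(2)
  obtain I where I: "ideal I R" "K j = ideal_sm R M I (carrier M)"
    using comps by blast
  have subs: "submodule (K k) R M" if "k \<in> insert j T" for k
    using comps[OF that] ideal_sm_submodule[OF _ subset_refl] by auto
  have ST: "submodule (sm_Sum R M T K) R M"
    using subs by (intro sm_Sum_submodule) blast
  have "N \<subseteq> sm_sum M (K j) (sm_Sum R M T K)"
    using N_sub sm_Sum_insert_subset[OF subs] by (rule subset_trans)
  then have "N \<subseteq> K j \<or> N \<subseteq> sm_Sum R M T K"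
    using PS_hollowD[OF hollow I(1) ST] unfolding I(2) by blast
  then show ?case
    using insert.IH comps by blast
qed

lemma direct_sum_rep_Int_zero:
  assumes "direct_sum_rep R M n K" and "submodule (K i) R M" "submodule (K j) R M"
    and "i \<in> {1..n}" "j \<in> {1..n}" "i \<noteq> j"
  shows "K i \<inter> K j = {\<zero>\<^bsub>M\<^esub>}"
  using assms sm_Sum_upper[of j "{1..n} - {i}" K] submodule_zero_closed
  unfolding direct_sum_rep_def by blast

lemma min_second_rep_direct_sum_iff:
  assumes rep: "min_second_rep R M n K"
    and incomp: "\<forall>i\<in>{1..n}. \<forall>j\<in>{1..n}. i \<noteq> j \<longrightarrow> \<not> Ann R M (K i) \<subseteq> Ann R M (K j)"
    and hollow: "\<forall>i\<in>{1..n}. PS_hollow R M (K i \<inter> sm_Sum R M ({1..n} - {i}) K)"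
  shows "direct_sum_rep R M n K \<longleftrightarrow>
    (\<forall>i\<in>{1..n}. \<forall>j\<in>{1..n}. i \<noteq> j \<longrightarrow> K i \<inter> K j = {\<zero>\<^bsub>M\<^esub>})"
proof -
  have sum: "sm_Sum R M {1..n} K = carrier M"
    and subs: "\<And>k. k \<in> {1..n} \<Longrightarrow> submodule (K k) R M"
    using rep unfolding min_second_rep_def second_sm_def by auto
  show ?thesis
  proof
    assume "direct_sum_rep R M n K"
    then show "\<forall>i\<in>{1..n}. \<forall>j\<in>{1..n}. i \<noteq> j \<longrightarrow> K i \<inter> K j = {\<zero>\<^bsub>M\<^esub>}"
      using direct_sum_rep_Int_zero subs by blast
  next
    assume pairwise: "\<forall>i\<in>{1..n}. \<forall>j\<in>{1..n}. i \<noteq> j \<longrightarrow> K i \<inter> K j = {\<zero>\<^bsub>M\<^esub>}"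
    show "direct_sum_rep R M n K"
      unfolding direct_sum_rep_def
    proof (intro conjI ballI sum)
      fix i assume i: "i \<in> {1..n}"
      let ?N = "K i \<inter> sm_Sum R M ({1..n} - {i}) K"
      have "?N \<subseteq> {\<zero>\<^bsub>M\<^esub>} \<or> (\<exists>t\<in>{1..n} - {i}. ?N \<subseteq> K t)"
        using PS_hollow_subset_sm_Sum[OF bspec[OF hollow i], of "{1..n} - {i}" K]
          min_second_rep_component_eq_ideal_sm[OF rep incomp] by blast
      then have "?N \<subseteq> {\<zero>\<^bsub>M\<^esub>}"
        using pairwise i by blast
      then show "?N = {\<zero>\<^bsub>M\<^esub>}"
        using submodule_zero_closed[OF subs[OF i]] zero_mem_sm_Sum by blast
    qed
  qed
qed

lemma Int_not_strongly_irreducible: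
  assumes "submodule A R M" "submodule B R M" "\<not> A \<subseteq> B" "\<not> B \<subseteq> A"
  shows "\<not> strongly_irreducible R M (A \<inter> B)"
  using assms unfolding strongly_irreducible_def by blast

lemma irredundant_sum_not_subset:
  assumes "\<forall>j\<in>{1..n}. \<not> K j \<subseteq> sm_Sum R M ({1..n} - {j}) K"
    and "i \<in> {1..n}" "j \<in> {1..n}" "i \<noteq> j"
  shows "\<not> K i \<subseteq> K j"
  using assms sm_Sum_upper[of j "{1..n} - {i}" K] by blast

lemma min_PS_hollow_rep_Int_zero:
  assumes rep: "min_PS_hollow_rep R M n K H"
    and trichotomy: "\<forall>i\<in>{1..n}. \<forall>N. submodule N R M \<longrightarrow> N \<subseteq> K i \<longrightarrow>
      N = {\<zero>\<^bsub>M\<^esub>} \<or> strongly_irreducible R M N \<or> H_PS_hollow R M (H i) N"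
    and ij: "i \<in> {1..n}" "j \<in> {1..n}" "i \<noteq> j"
  shows "K i \<inter> K j = {\<zero>\<^bsub>M\<^esub>}"
proof (rule ccontr)
  assume nonzero: "K i \<inter> K j \<noteq> {\<zero>\<^bsub>M\<^esub>}"
  have hollow: "\<forall>k\<in>{1..n}. H_PS_hollow R M (H k) (K k)"
    and incomp: "\<forall>i\<in>{1..n}. \<forall>j\<in>{1..n}. i \<noteq> j \<longrightarrow> \<not> In_sm R M (K i) \<subseteq> In_sm R M (K j)"
    and irred: "\<forall>j\<in>{1..n}. \<not> K j \<subseteq> sm_Sum R M ({1..n} - {j}) K"
    using rep unfolding min_PS_hollow_rep_def by auto
  have Ki: "submodule (K i) R M" and Kj: "submodule (K j) R M"
    using hollow ij unfolding H_PS_hollow_def PS_hollow_def by auto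
  have "\<not> strongly_irreducible R M (K i \<inter> K j)"
    using Int_not_strongly_irreducible[OF Ki Kj] irredundant_sum_not_subset[OF irred] ij by blast
  then have "H_PS_hollow R M (H i) (K i \<inter> K j)" "H_PS_hollow R M (H j) (K i \<inter> K j)"
    using trichotomy ij submodule_Int[OF Ki Kj] nonzero by blast+
  then have "H_set R M (K i) = H_set R M (K j)"
    using hollow ij unfolding H_PS_hollow_def by auto
  then have "In_sm R M (K i) = In_sm R M (K j)"
    unfolding In_sm_def by simp
  then show False
    using incomp ij by blast
qed

lemma distributive_Int_sm_Sum_zero:
  assumes dist: "distributive_module R M" and A: "submodule A R M" and "finite T"
    and comps: "\<And>t. t \<in> T \<Longrightarrow> submodule (K t) R M \<and> A \<inter> K t = {\<zero>\<^bsub>M\<^esub>}"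
  shows "A \<inter> sm_Sum R M T K = {\<zero>\<^bsub>M\<^esub>}"
  using \<open>finite T\<close> comps
proof (induction T rule: finite_induct)
  case empty
  then show ?case using submodule_zero_closed[OF A] by (simp add: sm_Sum_empty)
next
  case (insert j T)
  have subs: "\<And>k. k \<in> insert j T \<Longrightarrow> submodule (K k) R M"
    using insert.prems by blast
  have ST: "submodule (sm_Sum R M T K) R M"
    using subs by (intro sm_Sum_submodule) blast
  have "A \<inter> sm_Sum R M (insert j T) K \<subseteq> A \<inter> sm_sum M (K j) (sm_Sum R M T K)"
    using sm_Sum_insert_subset[OF subs] by (rule Int_mono[OF subset_refl])
  also have "\<dots> = sm_sum M (A \<inter> K j) (A \<inter> sm_Sum R M T K)"
    using dist A subs[OF insertI1] ST unfolding distributive_module_def by blast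
  also have "\<dots> = {\<zero>\<^bsub>M\<^esub>}"
    using insert.prems insert.IH by (simp add: sm_sum_zero)
  finally show ?case
    using submodule_zero_closed[OF A] zero_mem_sm_Sum by blast
qed

lemma min_PS_hollow_rep_direct_sum:
  assumes dist: "distributive_module R M" and rep: "min_PS_hollow_rep R M n K H"
    and trichotomy: "\<forall>i\<in>{1..n}. \<forall>N. submodule N R M \<longrightarrow> N \<subseteq> K i \<longrightarrow>
      N = {\<zero>\<^bsub>M\<^esub>} \<or> strongly_irreducible R M N \<or> H_PS_hollow R M (H i) N"
  shows "direct_sum_rep R M n K"
proof -
  have sum: "sm_Sum R M {1..n} K = carrier M"
    and subs: "\<And>k. k \<in> {1..n} \<Longrightarrow> submodule (K k) R M"
    using rep unfolding min_PS_hollow_rep_def H_PS_hollow_def PS_hollow_def by auto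
  have "K i \<inter> sm_Sum R M ({1..n} - {i}) K = {\<zero>\<^bsub>M\<^esub>}" if i: "i \<in> {1..n}" for i
  proof (rule distributive_Int_sm_Sum_zero[OF dist subs[OF i]])
    fix t assume "t \<in> {1..n} - {i}"
    then show "submodule (K t) R M \<and> K i \<inter> K t = {\<zero>\<^bsub>M\<^esub>}"
      using subs min_PS_hollow_rep_Int_zero[OF rep trichotomy i] by blast
  qed simp
  then show ?thesis
    using sum unfolding direct_sum_rep_def by blast
qed

end

theorem theorem5p21:
  fixes R :: "'a ring" and M :: "('a, 'b) module"
  assumes "module R M" and "carrier M \<noteq> {\<zero>\<^bsub>M\<^esub>}"
  shows "(\<forall>n K. min_second_rep R M n K \<longrightarrow>
            (\<forall>i\<in>{1..n}. \<forall>j\<in>{1..n}. i \<noteq> j \<longrightarrow> \<not> Ann R M (K i) \<subseteq> Ann R M (K j)) \<longrightarrow>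
            (\<forall>i\<in>{1..n}. PS_hollow R M (K i \<inter> sm_Sum R M ({1..n} - {i}) K)) \<longrightarrow>
            (direct_sum_rep R M n K \<longleftrightarrow>
               (\<forall>i\<in>{1..n}. \<forall>j\<in>{1..n}. i \<noteq> j \<longrightarrow> K i \<inter> K j = {\<zero>\<^bsub>M\<^esub>})))
       \<and> (distributive_module R M \<longrightarrow>
          (\<forall>n K H. min_PS_hollow_rep R M n K H \<longrightarrow>
            (\<forall>i\<in>{1..n}. \<forall>N. submodule N R M \<longrightarrow> N \<subseteq> K i \<longrightarrow>
               N = {\<zero>\<^bsub>M\<^esub>} \<or> strongly_irreducible R M N \<or> H_PS_hollow R M (H i) N) \<longrightarrow>
            direct_sum_rep R M n K))"
  using module.min_second_rep_direct_sum_iff[OF assms(1)]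
    module.min_PS_hollow_rep_direct_sum[OF assms(1)]
  by blast

end
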